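(* Let $(S,1\cdots1)$ be a tree pattern with all edges contiguous, and let $x$ be a vertex of $S$ that has no right child, such that for every edge $(u,v)$ of $S$ with $v$ the right child of $u$, either $v$ is a leaf or $x$ lies in the subtree $S(v)$. Let $(P,e)$ and $(P',e')$ be tree patterns with $P,P'\in\mathcal{T}_k$, and let $Q$ and $Q'$ be the tree patterns obtained from $(S,1\cdots1)$ by attaching $(P,e)$, respectively $(P',e')$, as the right subtree of $x$ via a non-contiguous edge (all other edge types unchanged). If $(P,e)$ and $(P',e')$ are Wilf-equivalent, then $Q$ and $Q'$ are Wilf-equivalent.
   Context: $\mathcal{T}_n$ is the set of binary trees on $n$ vertices labeled $1,\dots,n$ by the search tree property (after attaching subtrees, vertex labels are reassigned according to this property). $c_L,c_R,p$: left child, right child, parent. A tree pattern is $(P,e)$, $P\in\mathcal{T}_k$, $e\colon[k]\setminus\{\text{root}\}\to\{0,1\}$; the edge $(i,p(i))$ is contiguous if $e(i)=1$ and non-contiguous if $e(i)=0$. $T\in\mathcal{T}_n$ contains $(P,e)$ if there is an injection $f\colon[k]\to[n]$ such that for every non-root $i$ of $P$: if $e(i)=1$, $f(i)$ is the left (resp. right) child of $f(p(i))$ when $i$ is the left (resp. right) child of $p(i)$; if $e(i)=0$, $f(i)$ lies in the left (resp. right) subtree of $f(p(i))$. $\mathcal{T}_n(P,e)$ is the set of avoiders. Two tree patterns $Q,Q'$ are Wilf-equivalent if $|\mathcal{T}_n(Q)|=|\mathcal{T}_n(Q')|$ for all $n\ge0$. *)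

theory Defs
  imports Main
begin

text \<open>Unlabelled binary trees; the search-tree labelling of a tree in T_n is
determined by its shape, so T_n is identified with the shapes having n vertices.
A vertex is addressed by its path from the root (False = left, True = right);
the left/right child of vertex v is v @ [False] / v @ [True].\<close>

datatype btree = Leaf | Node btree btree

fun tsize :: "btree \<Rightarrow> nat" where
  "tsize Leaf = 0"
| "tsize (Node l r) = Suc (tsize l + tsize r)"

fun nodes :: "btree \<Rightarrow> bool list set" where
  "nodes Leaf = {}"
| "nodes (Node l r) = {[]} \<union> Cons False ` nodes l \<union> Cons True ` nodes r"

text \<open>A tree pattern (P,e): e assigns to each non-root vertex i of P the type of
the edge (i, p(i)): True = contiguous, False = non-contiguous.\<close>

type_synonym pattern = "btree \<times> (bool list \<Rightarrow> bool)"

definition contains :: "btree \<Rightarrow> pattern \<Rightarrow> bool" where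
  "contains T Pe \<longleftrightarrow> (case Pe of (P, e) \<Rightarrow>
     (\<exists>f. inj_on f (nodes P) \<and> f ` nodes P \<subseteq> nodes T \<and>
        (\<forall>q d. q @ [d] \<in> nodes P \<longrightarrow>
           (if e (q @ [d]) then f (q @ [d]) = f q @ [d]
            else (\<exists>r. f (q @ [d]) = f q @ d # r)))))"

definition avoiders :: "nat \<Rightarrow> pattern \<Rightarrow> btree set" where
  "avoiders n Q = {T. tsize T = n \<and> \<not> contains T Q}"

definition wilf_equiv :: "pattern \<Rightarrow> pattern \<Rightarrow> bool" where
  "wilf_equiv Q Q' \<longleftrightarrow> (\<forall>n. card (avoiders n Q) = card (avoiders n Q'))"

fun graft :: "btree \<Rightarrow> bool list \<Rightarrow> btree \<Rightarrow> btree" where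
  "graft t [] s = s"
| "graft (Node l r) (False # p) s = Node (graft l p s) r"
| "graft (Node l r) (True # p) s = Node l (graft r p s)"
| "graft Leaf (_ # _) s = Leaf"

definition attach_right :: "btree \<Rightarrow> bool list \<Rightarrow> pattern \<Rightarrow> pattern" where
  "attach_right S x Pe = (case Pe of (P, e) \<Rightarrow>
     (graft S (x @ [True]) P,
      \<lambda>w. if w = x @ [True] then False
          else if take (Suc (length x)) w = x @ [True] then e (drop (Suc (length x)) w)
          else True))"

end

theory Submission
  imports Defs "HOL-Library.Sublist"
begin

text \<open>An occurrence of Q = attach_right S x (P,e) in T is an occurrence of S at some position z
together with an occurrence of (P,e) in the right subtree of the image z x of x. Call these images
marks, and call a mark top (right_minimal) if it does not lie in the right subtree of another
mark. Since
containment passes from subtrees to trees, T avoids Q iff the right subtree of every top mark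
avoids (P,e). The hypothesis on S ensures that an occurrence of S reaching strictly below a right
child has its mark below that child as well, so replacing the right subtrees of the top marks
does not change the top marks. Wilf-equivalence yields a size-preserving injection g on trees
sending (P,e)-avoiders to (P',e')-avoiders; applying g to the right subtree of every top mark is
then a size-preserving injection from Q-avoiders to Q'-avoiders, and symmetry gives equality.\<close>

fun subtree :: "btree \<Rightarrow> bool list \<Rightarrow> btree" where
  "subtree t [] = t"
| "subtree Leaf (_ # _) = Leaf"
| "subtree (Node l r) (False # p) = subtree l p"
| "subtree (Node l r) (True # p) = subtree r p"

lemma subtree_Leaf [simp]: "subtree Leaf p = Leaf"
  by (cases p) auto

lemma subtree_append: "subtree t (p @ q) = subtree (subtree t p) q"
  by (induction t p rule: subtree.induct) auto

lemma mem_nodes_iff_subtree: "p \<in> nodes t \<longleftrightarrow> subtree t p \<noteq> Leaf"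
proof (induction t p rule: subtree.induct)
  case (1 t)
  then show ?case by (cases t) auto
qed auto

lemma nodes_subtree: "q \<in> nodes (subtree t p) \<longleftrightarrow> p @ q \<in> nodes t"
  by (simp add: mem_nodes_iff_subtree subtree_append)

lemma nodes_appendD: "p @ q \<in> nodes t \<Longrightarrow> p \<in> nodes t"
  by (metis mem_nodes_iff_subtree subtree_Leaf subtree_append)

lemma nodes_prefixD: "prefix p q \<Longrightarrow> q \<in> nodes t \<Longrightarrow> p \<in> nodes t"
  by (auto elim: prefixE intro: nodes_appendD)

lemma tsize_eq_0_iff: "tsize t = 0 \<longleftrightarrow> t = Leaf"
  by (cases t) auto

lemma finite_tsize_le: "finite {t. tsize t \<le> n}"
proof (induction n)
  case 0
  then show ?case by (simp add: tsize_eq_0_iff)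
next
  case (Suc n)
  let ?small = "{t. tsize t \<le> n}"
  have "{t. tsize t \<le> Suc n} \<subseteq> insert Leaf (case_prod Node ` (?small \<times> ?small))"
  proof
    fix t assume "t \<in> {t. tsize t \<le> Suc n}"
    then show "t \<in> insert Leaf (case_prod Node ` (?small \<times> ?small))"
      by (cases t) force+
  qed
  then show ?case using Suc by (simp add: finite_subset)
qed

lemma finite_tsize_eq: "finite {t. tsize t = n}"
  by (rule finite_subset[OF _ finite_tsize_le[of n]]) auto

fun replace_subtrees :: "btree \<Rightarrow> bool list set \<Rightarrow> (btree \<Rightarrow> btree) \<Rightarrow> btree" where
  "replace_subtrees Leaf A g = (if [] \<in> A then g Leaf else Leaf)"
| "replace_subtrees (Node l r) A g = (if [] \<in> A then g (Node l r)
     else Node (replace_subtrees l {p. False # p \<in> A} g) (replace_subtrees r {p. True # p \<in> A} g))"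

lemma tsize_replace_subtrees:
  "(\<And>t. tsize (g t) = tsize t) \<Longrightarrow> tsize (replace_subtrees t A g) = tsize t"
  by (induction t arbitrary: A) auto

lemma subtree_replace_subtrees:
  assumes "g Leaf = Leaf" and "p \<in> A" and "\<forall>q\<in>A. \<not> strict_prefix q p"
  shows "subtree (replace_subtrees t A g) p = g (subtree t p)"
  using assms(2,3)
proof (induction t arbitrary: A p)
  case Leaf
  then show ?case using assms(1) by (cases p) auto
next
  case (Node l r)
  then show ?case
  proof (cases p)
    case (Cons d p')
    have "[] \<notin> A" using Node.prems(2) Cons by auto
    moreover have "\<forall>q\<in>{q. d # q \<in> A}. \<not> strict_prefix q p'" using Node.prems(2) Cons by auto
    ultimately show ?thesis using Node Cons by (cases d) auto
  qed simp
qed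

lemma nodes_replace_subtrees:
  assumes "\<And>t. g t = Leaf \<longleftrightarrow> t = Leaf" and "\<forall>q\<in>A. \<not> strict_prefix q p"
  shows "p \<in> nodes (replace_subtrees t A g) \<longleftrightarrow> p \<in> nodes t"
  using assms(2)
proof (induction t arbitrary: A p)
  case Leaf
  then show ?case using assms(1)[of Leaf] by simp
next
  case (Node l r)
  show ?case
  proof (cases p)
    case Nil
    then show ?thesis using assms(1)[of "Node l r"] by (cases "g (Node l r)") auto
  next
    case (Cons d p')
    have "[] \<notin> A" using Node.prems Cons by auto
    moreover have "\<forall>q\<in>{q. d # q \<in> A}. \<not> strict_prefix q p'" using Node.prems Cons by auto
    ultimately show ?thesis using Node.IH Cons by (cases d) auto
  qed
qed

lemma inj_replace_subtrees:
  assumes "inj g"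
  shows "inj (\<lambda>t. replace_subtrees t A g)"
proof (rule injI)
  fix t u assume "replace_subtrees t A g = replace_subtrees u A g"
  then show "t = u"
  proof (induction t arbitrary: A u)
    case Leaf
    then show ?case using injD[OF assms] by (cases u) (auto split: if_splits)
  next
    case (Node l r)
    then show ?case using injD[OF assms] by (cases u) (auto split: if_splits)
  qed
qed

lemma finite_bij_betw_self_mapping_subset:
  assumes "finite B" and "A \<subseteq> B" and "A' \<subseteq> B" and "card A = card A'"
  obtains h where "bij_betw h B B" and "h ` A = A'"
proof -
  have "finite A" "finite A'" using assms finite_subset by blast+
  then obtain h1 where h1: "bij_betw h1 A A'"
    using assms(4) finite_same_card_bij by blast
  have "card (B - A) = card (B - A')"
    using assms \<open>finite A\<close> \<open>finite A'\<close> by (simp add: card_Diff_subset)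
  then obtain h2 where h2: "bij_betw h2 (B - A) (B - A')"
    using assms(1) finite_same_card_bij by blast
  define h where "h t = (if t \<in> A then h1 t else h2 t)" for t
  have "bij_betw h A A'" using h1 by (rule bij_betw_cong[THEN iffD1, rotated]) (simp add: h_def)
  moreover have "bij_betw h (B - A) (B - A')"
    using h2 by (rule bij_betw_cong[THEN iffD1, rotated]) (simp add: h_def)
  ultimately have "bij_betw h (A \<union> (B - A)) (A' \<union> (B - A'))"
    by (rule bij_betw_combine) blast
  then have "bij_betw h B B" using assms(2,3) by (simp add: Un_absorb1 Un_Diff_cancel)
  moreover have "h ` A = A'" using \<open>bij_betw h A A'\<close> by (simp add: bij_betw_def)
  ultimately show thesis by (rule that)
qed

lemma wilf_equiv_avoider_injection:
  assumes "wilf_equiv Q Q'"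
  obtains g where "inj g" and "\<And>t. tsize (g t) = tsize t"
    and "\<And>t. \<not> contains t Q \<Longrightarrow> \<not> contains (g t) Q'"
proof -
  have "\<exists>h. bij_betw h {t. tsize t = n} {t. tsize t = n} \<and> h ` avoiders n Q = avoiders n Q'" for n
    using assms finite_tsize_eq
    by (metis (mono_tags, lifting) Collect_mono avoiders_def finite_bij_betw_self_mapping_subset wilf_equiv_def)
  then obtain h where h: "\<And>n. bij_betw (h n) {t. tsize t = n} {t. tsize t = n}"
    and h_avoiders: "\<And>n. h n ` avoiders n Q = avoiders n Q'"
    by metis
  define g where "g t = h (tsize t) t" for t
  have size: "tsize (g t) = tsize t" for t
    using h[of "tsize t"] by (auto simp: g_def bij_betw_def)
  have "inj g"
  proof (rule injI)
    fix t u assume "g t = g u"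
    moreover from this have "tsize t = tsize u" by (metis size)
    ultimately show "t = u"
      using h[of "tsize t"] by (auto simp: g_def bij_betw_def dest: inj_onD)
  qed
  moreover have "\<not> contains (g t) Q'" if "\<not> contains t Q" for t
  proof -
    have "t \<in> avoiders (tsize t) Q" using that by (simp add: avoiders_def)
    then have "g t \<in> avoiders (tsize t) Q'" using h_avoiders by (auto simp: g_def)
    then show ?thesis by (simp add: avoiders_def)
  qed
  ultimately show thesis using size that by blast
qed

definition embedding :: "btree \<Rightarrow> (bool list \<Rightarrow> bool) \<Rightarrow> btree \<Rightarrow> (bool list \<Rightarrow> bool list) \<Rightarrow> bool" where
  "embedding P e T f \<longleftrightarrow> inj_on f (nodes P) \<and> f ` nodes P \<subseteq> nodes T \<and>
     (\<forall>q d. q @ [d] \<in> nodes P \<longrightarrow>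
        (if e (q @ [d]) then f (q @ [d]) = f q @ [d] else (\<exists>r. f (q @ [d]) = f q @ d # r)))"

lemma contains_iff_embedding: "contains T (P, e) \<longleftrightarrow> (\<exists>f. embedding P e T f)"
  by (simp add: contains_def embedding_def)

lemma contains_subtree: "contains (subtree T p) (P, e) \<Longrightarrow> contains T (P, e)"
proof -
  assume "contains (subtree T p) (P, e)"
  then obtain f where "embedding P e (subtree T p) f" by (auto simp: contains_iff_embedding)
  then have "embedding P e T (\<lambda>w. p @ f w)"
    by (auto simp: embedding_def inj_on_def nodes_subtree)
  then show ?thesis by (auto simp: contains_iff_embedding)
qed

lemma nodes_graft:
  assumes "x \<in> nodes S" and "x @ [d] \<notin> nodes S"
  shows "nodes (graft S (x @ [d]) P) = nodes S \<union> (\<lambda>v. x @ d # v) ` nodes P"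
  using assms
proof (induction S arbitrary: x)
  case (Node l r)
  show ?case
  proof (cases x)
    case Nil
    with Node.prems show ?thesis by (cases d; cases l; cases r) auto
  next
    case (Cons c x')
    show ?thesis
    proof (cases c)
      case True
      with Node.prems Cons have "x' \<in> nodes r" "x' @ [d] \<notin> nodes r" by auto
      then have "nodes (graft r (x' @ [d]) P) = nodes r \<union> (\<lambda>v. x' @ d # v) ` nodes P"
        by (rule Node.IH(2))
      with Cons True show ?thesis by (auto simp: image_Un image_image)
    next
      case False
      with Node.prems Cons have "x' \<in> nodes l" "x' @ [d] \<notin> nodes l" by auto
      then have "nodes (graft l (x' @ [d]) P) = nodes l \<union> (\<lambda>v. x' @ d # v) ` nodes P"
        by (rule Node.IH(1))
      with Cons False show ?thesis by (auto simp: image_Un image_image)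
    qed
  qed
qed simp

definition right_minimal :: "(bool list \<Rightarrow> bool) \<Rightarrow> bool list \<Rightarrow> bool" where
  "right_minimal M y \<longleftrightarrow> M y \<and> \<not> (\<exists>y'. M y' \<and> prefix (y' @ [True]) y)"

lemma right_minimal_below:
  assumes "M y"
  shows "\<exists>y0. right_minimal M y0 \<and> (y0 = y \<or> prefix (y0 @ [True]) y)"
  using assms
proof (induction y rule: length_induct)
  case (1 y)
  show ?case
  proof (cases "right_minimal M y")
    case False
    then obtain y' where "M y'" and y'_y: "prefix (y' @ [True]) y"
      using "1.prems" by (auto simp: right_minimal_def)
    moreover from y'_y have "length y' < length y" by (auto dest: prefix_length_le)
    ultimately obtain y0 where "right_minimal M y0" "y0 = y' \<or> prefix (y0 @ [True]) y'"
      using "1.IH" by blast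
    with y'_y show ?thesis by (meson append_prefixD prefix_order.trans)
  qed blast
qed

lemma right_minimal_cong:
  assumes agree: "\<And>y. \<not> (\<exists>y0. right_minimal M y0 \<and> prefix (y0 @ [True]) y) \<Longrightarrow> M' y \<longleftrightarrow> M y"
  shows "right_minimal M' = right_minimal M"
proof -
  let ?below = "\<lambda>y. \<exists>y0. right_minimal M y0 \<and> prefix (y0 @ [True]) y"
  have not_below: "\<not> ?below y" if "right_minimal M y" for y
    using that by (auto simp: right_minimal_def)
  have below_mono: "?below y" if "?below y'" and "prefix (y' @ [True]) y" for y y'
    using that by (meson append_prefixD prefix_order.trans)
  have "right_minimal M' y \<longleftrightarrow> right_minimal M y" for y
  proof
    assume y: "right_minimal M' y"
    have "\<not> ?below y"
    proof
      assume "?below y"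
      then obtain y0 where "right_minimal M y0" and "prefix (y0 @ [True]) y" by blast
      moreover from \<open>right_minimal M y0\<close> have "M' y0"
        using agree not_below by (auto simp: right_minimal_def)
      ultimately show False using y by (auto simp: right_minimal_def)
    qed
    with y show "right_minimal M y"
      using agree below_mono unfolding right_minimal_def by metis
  next
    assume "right_minimal M y"
    then show "right_minimal M' y"
      using agree not_below below_mono unfolding right_minimal_def by metis
  qed
  then show ?thesis by blast
qed

definition occurs_at :: "btree \<Rightarrow> btree \<Rightarrow> bool list \<Rightarrow> bool" where
  "occurs_at S T z \<longleftrightarrow> (\<forall>s\<in>nodes S. z @ s \<in> nodes T)"

locale attach_site =
  fixes S :: btree and x :: "bool list"
  assumes x_in_S: "x \<in> nodes S" and right_child_x_notin_S: "x @ [True] \<notin> nodes S"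
begin

lemma not_prefix_right_child_x: "s \<in> nodes S \<Longrightarrow> \<not> prefix (x @ [True]) s"
  using nodes_prefixD right_child_x_notin_S by blast

lemma attach_right_parts:
  assumes "attach_right S x (P, e) = (Q, eQ)"
  shows nodes_attach_right: "nodes Q = nodes S \<union> (\<lambda>v. x @ True # v) ` nodes P"
    and label_attach_right_S: "w \<in> nodes S \<Longrightarrow> eQ w"
    and label_attach_right_P: "eQ (x @ True # v) \<longleftrightarrow> v \<noteq> [] \<and> e v"
proof -
  have Q: "Q = graft S (x @ [True]) P"
    and eQ: "eQ = (\<lambda>w. if w = x @ [True] then False
          else if take (Suc (length x)) w = x @ [True] then e (drop (Suc (length x)) w)
          else True)"
    using assms by (auto simp: attach_right_def)
  show "nodes Q = nodes S \<union> (\<lambda>v. x @ True # v) ` nodes P"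
    unfolding Q using x_in_S right_child_x_notin_S by (rule nodes_graft)
  show "eQ (x @ True # v) \<longleftrightarrow> v \<noteq> [] \<and> e v"
    unfolding eQ by simp
  assume "w \<in> nodes S"
  then have "take (Suc (length x)) w \<noteq> x @ [True]"
    using not_prefix_right_child_x by (metis length_append_singleton take_is_prefix)
  with \<open>w \<in> nodes S\<close> show "eQ w"
    unfolding eQ using right_child_x_notin_S by auto
qed

lemma embedding_attach_right_restrict:
  assumes att: "attach_right S x (P, e) = (Q, eQ)" and "embedding Q eQ T f"
  shows "occurs_at S T (f [])"
    and "\<exists>G. embedding P e (subtree T (f [] @ x @ [True])) G"
proof -
  note nodesQ = nodes_attach_right[OF att]
  from \<open>embedding Q eQ T f\<close> have inj: "inj_on f (nodes Q)" and img: "f ` nodes Q \<subseteq> nodes T"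
    and edge: "\<And>q d. q @ [d] \<in> nodes Q \<Longrightarrow>
      (if eQ (q @ [d]) then f (q @ [d]) = f q @ [d] else (\<exists>r. f (q @ [d]) = f q @ d # r))"
    unfolding embedding_def by blast+
  define z where "z = f []"
  have f_S: "f s = z @ s" if "s \<in> nodes S" for s
    using that
  proof (induction s rule: rev_induct)
    case (snoc d q)
    then have "q \<in> nodes S" by (blast intro: nodes_appendD)
    moreover have "f (q @ [d]) = f q @ [d]"
      using edge[of q d] snoc.prems nodesQ label_attach_right_S[OF att] by auto
    ultimately show ?case using snoc.IH by simp
  qed (simp add: z_def)
  then show "occurs_at S T (f [])"
    using img nodesQ unfolding occurs_at_def z_def by force
  have f_P: "\<exists>u. f (x @ True # v) = z @ x @ True # u" if "v \<in> nodes P" for v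
    using that
  proof (induction v rule: rev_induct)
    case Nil
    then have "x @ [True] \<in> nodes Q" using nodesQ by force
    then have "\<exists>r. f (x @ [True]) = f x @ True # r"
      using edge[of x True] label_attach_right_P[OF att, of "[]"] by simp
    then show ?case using f_S[OF x_in_S] by simp
  next
    case (snoc d v)
    then obtain u where "f (x @ True # v) = z @ x @ True # u" by (blast intro: nodes_appendD)
    moreover have "(x @ True # v) @ [d] \<in> nodes Q" using snoc.prems nodesQ by force
    ultimately show ?case using edge[of "x @ True # v" d] by (auto split: if_splits)
  qed
  define G where "G = (\<lambda>v. drop (Suc (length (z @ x))) (f (x @ True # v)))"
  have f_G: "f (x @ True # v) = z @ x @ True # G v" if "v \<in> nodes P" for v
    using f_P[OF that] unfolding G_def by auto
  have "embedding P e (subtree T (z @ x @ [True])) G"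
    unfolding embedding_def
  proof (intro conjI allI impI)
    show "inj_on G (nodes P)"
    proof (rule inj_onI)
      fix v w assume "v \<in> nodes P" "w \<in> nodes P" "G v = G w"
      then have "f (x @ True # v) = f (x @ True # w)" using f_G by simp
      then show "v = w" using inj \<open>v \<in> nodes P\<close> \<open>w \<in> nodes P\<close> nodesQ by (auto dest: inj_onD)
    qed
    show "G ` nodes P \<subseteq> nodes (subtree T (z @ x @ [True]))"
      using img nodesQ f_G by (force simp: nodes_subtree)
    fix q d assume "q @ [d] \<in> nodes P"
    then have "(x @ True # q) @ [d] \<in> nodes Q" using nodesQ by force
    moreover have "q \<in> nodes P" using \<open>q @ [d] \<in> nodes P\<close> by (rule nodes_appendD)
    ultimately show "if e (q @ [d]) then G (q @ [d]) = G q @ [d] else (\<exists>r. G (q @ [d]) = G q @ d # r)"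
      using edge[of "x @ True # q" d] label_attach_right_P[OF att, of "q @ [d]"]
        f_G[OF \<open>q @ [d] \<in> nodes P\<close>] f_G[of q] by (auto split: if_splits)
  qed
  then show "\<exists>G. embedding P e (subtree T (f [] @ x @ [True])) G" unfolding z_def by blast
qed

lemma embedding_attach_right_extend:
  assumes att: "attach_right S x (P, e) = (Q, eQ)"
    and "occurs_at S T z" and "embedding P e (subtree T (z @ x @ [True])) G"
  shows "\<exists>f. embedding Q eQ T f"
proof -
  from \<open>embedding P e (subtree T (z @ x @ [True])) G\<close> have injG: "inj_on G (nodes P)"
    and imgG: "G ` nodes P \<subseteq> nodes (subtree T (z @ x @ [True]))"
    and edgeG: "\<And>q d. q @ [d] \<in> nodes P \<Longrightarrow>
      (if e (q @ [d]) then G (q @ [d]) = G q @ [d] else (\<exists>r. G (q @ [d]) = G q @ d # r))"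
    unfolding embedding_def by blast+
  define f where "f w = (if prefix (x @ [True]) w
    then z @ x @ True # G (drop (Suc (length x)) w) else z @ w)" for w
  have f_S: "f s = z @ s" if "s \<in> nodes S" for s
    using not_prefix_right_child_x[OF that] by (simp add: f_def)
  have f_P: "f (x @ True # v) = z @ x @ True # G v" for v
    by (simp add: f_def)
  let ?P_part = "(\<lambda>v. x @ True # v) ` nodes P"
  have "inj_on f (nodes S \<union> ?P_part)"
  proof (subst inj_on_Un, intro conjI)
    show "inj_on f (nodes S)" using f_S by (simp add: inj_on_def)
    show "inj_on f ?P_part" using injG f_P by (auto simp: inj_on_def)
    show "f ` (nodes S - ?P_part) \<inter> f ` (?P_part - nodes S) = {}"
      using f_S f_P not_prefix_right_child_x by fastforce
  qed
  moreover have "f ` (nodes S \<union> ?P_part) \<subseteq> nodes T"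
    using \<open>occurs_at S T z\<close> imgG f_S f_P by (auto simp: occurs_at_def nodes_subtree)
  moreover have "if eQ (q @ [d]) then f (q @ [d]) = f q @ [d] else (\<exists>r. f (q @ [d]) = f q @ d # r)"
    if qd: "q @ [d] \<in> nodes S \<union> ?P_part" for q d
  proof (cases "q @ [d] \<in> nodes S")
    case True
    then show ?thesis
      using f_S[OF True] f_S[OF nodes_appendD[OF True]] label_attach_right_S[OF att True] by simp
  next
    case False
    then obtain v where v: "v \<in> nodes P" "q @ [d] = x @ True # v" using qd by blast
    show ?thesis
    proof (cases v rule: rev_exhaust)
      case Nil
      then have "q = x" "d = True" using v by simp_all
      then show ?thesis using f_P f_S[OF x_in_S] label_attach_right_P[OF att, of "[]"] by simp
    next
      case (snoc v' d')
      then have "q = x @ True # v'" "d' = d" using v by simp_all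
      then show ?thesis
        using edgeG[of v' d] v snoc f_P label_attach_right_P[OF att, of "v' @ [d]"]
        by (auto split: if_splits)
    qed
  qed
  ultimately show ?thesis unfolding embedding_def nodes_attach_right[OF att] by blast
qed

lemma contains_attach_right_iff:
  "contains T (attach_right S x (P, e)) \<longleftrightarrow>
    (\<exists>z. occurs_at S T z \<and> contains (subtree T (z @ x @ [True])) (P, e))"
proof -
  obtain Q eQ where att: "attach_right S x (P, e) = (Q, eQ)" by fastforce
  show ?thesis
    unfolding att contains_iff_embedding
    using embedding_attach_right_restrict[OF att] embedding_attach_right_extend[OF att] by blast
qed

definition marked :: "btree \<Rightarrow> bool list \<Rightarrow> bool" where
  "marked T y \<longleftrightarrow> (\<exists>z. y = z @ x \<and> occurs_at S T z)"

definition top_slots :: "btree \<Rightarrow> bool list set" where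
  "top_slots T = {y @ [True] | y. right_minimal (marked T) y}"

lemma contains_attach_right_iff_top_mark:
  "contains T (attach_right S x (P, e)) \<longleftrightarrow>
    (\<exists>y. right_minimal (marked T) y \<and> contains (subtree T (y @ [True])) (P, e))"
proof
  assume "contains T (attach_right S x (P, e))"
  then obtain z where "occurs_at S T z" and z: "contains (subtree T (z @ x @ [True])) (P, e)"
    by (auto simp: contains_attach_right_iff)
  then have "marked T (z @ x)" by (auto simp: marked_def)
  then obtain y where y: "right_minimal (marked T) y" "y = z @ x \<or> prefix (y @ [True]) (z @ x)"
    using right_minimal_below by blast
  then have "prefix (y @ [True]) (z @ x @ [True])"
    by (metis append.assoc prefix_order.refl prefix_prefix)
  then obtain r where "z @ x @ [True] = (y @ [True]) @ r" by (auto elim: prefixE)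
  then have "subtree T (z @ x @ [True]) = subtree (subtree T (y @ [True])) r"
    by (simp only: subtree_append)
  then have "contains (subtree T (y @ [True])) (P, e)" using z contains_subtree by metis
  with y(1) show "\<exists>y. right_minimal (marked T) y \<and> contains (subtree T (y @ [True])) (P, e)"
    by blast
next
  assume "\<exists>y. right_minimal (marked T) y \<and> contains (subtree T (y @ [True])) (P, e)"
  then show "contains T (attach_right S x (P, e))"
    by (auto simp: contains_attach_right_iff marked_def right_minimal_def)
qed

end

locale regular_attach_site = attach_site +
  assumes right_child_leaf_or_above_x: "u @ [True] \<in> nodes S \<Longrightarrow>
    (u @ [True, False] \<notin> nodes S \<and> u @ [True, True] \<notin> nodes S) \<or> prefix (u @ [True]) x"
begin

lemma occurrence_below_right_child:
  assumes "s \<in> nodes S" and "strict_prefix (u @ [True]) (z @ s)"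
  shows "prefix (u @ [True]) (z @ x)"
proof (cases "prefix (u @ [True]) z")
  case False
  have "prefix z (u @ [True])"
    using False assms(2) prefix_same_cases[of z "z @ s" "u @ [True]"] by (auto simp: strict_prefix_def)
  then obtain w where "u @ [True] = z @ w" by (auto elim: prefixE)
  with False obtain w' where w': "u = z @ w'" "w = w' @ [True]"
    by (cases w rule: rev_exhaust) auto
  with assms(2) have "strict_prefix (w' @ [True]) s" by (simp add: strict_prefix_def)
  then obtain c r where "s = (w' @ [True]) @ c # r" by (auto elim: strict_prefixE')
  with assms(1) have "w' @ [True, c] \<in> nodes S" "w' @ [True] \<in> nodes S"
    by (metis append.assoc append_Cons append_Nil nodes_appendD)+
  then have "prefix (w' @ [True]) x" using right_child_leaf_or_above_x by (cases c) auto
  with w' show ?thesis by simp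
qed simp

lemma marked_replace_top_slots:
  assumes "\<And>t. g t = Leaf \<longleftrightarrow> t = Leaf"
    and "\<not> (\<exists>y0. right_minimal (marked T) y0 \<and> prefix (y0 @ [True]) y)"
  shows "marked (replace_subtrees T (top_slots T) g) y \<longleftrightarrow> marked T y"
proof -
  have "occurs_at S (replace_subtrees T (top_slots T) g) z \<longleftrightarrow> occurs_at S T z" if "y = z @ x" for z
  proof -
    have "\<forall>a\<in>top_slots T. \<not> strict_prefix a (z @ s)" if "s \<in> nodes S" for s
      using occurrence_below_right_child[OF that] assms(2) \<open>y = z @ x\<close> by (auto simp: top_slots_def)
    then show ?thesis using nodes_replace_subtrees[OF assms(1)] by (simp add: occurs_at_def)
  qed
  then show ?thesis by (auto simp: marked_def)
qed

lemma top_marks_replace_top_slots: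
  assumes "\<And>t. g t = Leaf \<longleftrightarrow> t = Leaf"
  shows "right_minimal (marked (replace_subtrees T (top_slots T) g)) = right_minimal (marked T)"
  using marked_replace_top_slots[OF assms] by (rule right_minimal_cong)

lemma subtree_replace_top_slots:
  assumes "g Leaf = Leaf" and "right_minimal (marked T) y"
  shows "subtree (replace_subtrees T (top_slots T) g) (y @ [True]) = g (subtree T (y @ [True]))"
proof (rule subtree_replace_subtrees)
  show "g Leaf = Leaf" by (fact assms(1))
  show "y @ [True] \<in> top_slots T" using assms(2) by (auto simp: top_slots_def)
  show "\<forall>a\<in>top_slots T. \<not> strict_prefix a (y @ [True])"
    using assms(2) by (auto simp: top_slots_def right_minimal_def strict_prefix_def)
qed

lemma top_slots_replace_top_slots:
  assumes "\<And>t. g t = Leaf \<longleftrightarrow> t = Leaf"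
  shows "top_slots (replace_subtrees T (top_slots T) g) = top_slots T"
proof -
  have "right_minimal (marked (replace_subtrees T (top_slots T) g)) = right_minimal (marked T)"
    using assms by (rule top_marks_replace_top_slots)
  then show ?thesis by (simp only: top_slots_def)
qed

lemma inj_replace_top_slots:
  assumes "inj g" and "\<And>t. g t = Leaf \<longleftrightarrow> t = Leaf"
  shows "inj (\<lambda>T. replace_subtrees T (top_slots T) g)"
proof (rule injI)
  fix T U assume eq: "replace_subtrees T (top_slots T) g = replace_subtrees U (top_slots U) g"
  then have "top_slots T = top_slots U"
    using top_slots_replace_top_slots[OF assms(2)] by metis
  with eq have "replace_subtrees T (top_slots T) g = replace_subtrees U (top_slots T) g" by simp
  then show "T = U" using inj_replace_subtrees[OF assms(1)] by (auto dest: injD)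
qed

lemma not_contains_attach_right_replace_top_slots:
  assumes "\<And>t. g t = Leaf \<longleftrightarrow> t = Leaf"
    and "\<And>t. \<not> contains t (P, e) \<Longrightarrow> \<not> contains (g t) (P', e')"
    and "\<not> contains T (attach_right S x (P, e))"
  shows "\<not> contains (replace_subtrees T (top_slots T) g) (attach_right S x (P', e'))"
proof -
  have "\<not> contains (subtree (replace_subtrees T (top_slots T) g) (y @ [True])) (P', e')"
    if "right_minimal (marked (replace_subtrees T (top_slots T) g)) y" for y
  proof -
    have y: "right_minimal (marked T) y"
      using that top_marks_replace_top_slots[OF assms(1)] by simp
    then have "\<not> contains (subtree T (y @ [True])) (P, e)"
      using assms(3) contains_attach_right_iff_top_mark by blast
    then show ?thesis using assms(1,2) subtree_replace_top_slots[OF _ y] by simp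
  qed
  then show ?thesis by (auto simp: contains_attach_right_iff_top_mark)
qed

lemma card_avoiders_attach_right_le:
  assumes "wilf_equiv (P, e) (P', e')"
  shows "card (avoiders n (attach_right S x (P, e))) \<le> card (avoiders n (attach_right S x (P', e')))"
proof -
  obtain g where "inj g" and size: "\<And>t. tsize (g t) = tsize t"
    and g_avoids: "\<And>t. \<not> contains t (P, e) \<Longrightarrow> \<not> contains (g t) (P', e')"
    using wilf_equiv_avoider_injection[OF assms] by blast
  have g_Leaf: "g t = Leaf \<longleftrightarrow> t = Leaf" for t using size tsize_eq_0_iff by metis
  let ?\<Phi> = "\<lambda>T. replace_subtrees T (top_slots T) g"
  have "inj_on ?\<Phi> (avoiders n (attach_right S x (P, e)))"
    using inj_replace_top_slots[OF \<open>inj g\<close> g_Leaf] by (rule inj_on_subset) simp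
  moreover have "?\<Phi> ` avoiders n (attach_right S x (P, e)) \<subseteq> avoiders n (attach_right S x (P', e'))"
    using not_contains_attach_right_replace_top_slots[OF g_Leaf g_avoids] size
    by (auto simp: avoiders_def tsize_replace_subtrees)
  moreover have "finite (avoiders n (attach_right S x (P', e')))"
    using finite_tsize_eq[of n] by (rule finite_subset[rotated]) (auto simp: avoiders_def)
  ultimately show ?thesis by (rule card_inj_on_le)
qed

end

theorem lemma17:
  fixes S P P' :: btree and x :: "bool list" and e e' :: "bool list \<Rightarrow> bool" and k :: nat
  assumes "x \<in> nodes S"
    and "x @ [True] \<notin> nodes S"
    and "\<forall>u. u @ [True] \<in> nodes S \<longrightarrow>
           ((u @ [True, False] \<notin> nodes S \<and> u @ [True, True] \<notin> nodes S)
            \<or> (\<exists>r. x = u @ [True] @ r))"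
    and "1 \<le> k" and "tsize P = k" and "tsize P' = k"
    and "wilf_equiv (P, e) (P', e')"
  shows "wilf_equiv (attach_right S x (P, e)) (attach_right S x (P', e'))"
proof -
  interpret regular_attach_site S x
    using assms(1-3) by unfold_locales (auto simp: prefix_def)
  have "wilf_equiv (P', e') (P, e)" using assms(7) by (simp add: wilf_equiv_def)
  then show ?thesis
    using card_avoiders_attach_right_le assms(7) by (simp add: wilf_equiv_def antisym)
qed

end
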